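(* Let $\Omega\subseteq X$ be projective and suppose there are no statically traded options. Then there is no One-Point Arbitrage on $\Omega$ in $\mathcal{H}(\mathbb{F}^{\mathrm{pr}})$ if and only if $\Omega^*=\Omega$.
   Context: $X$ Polish; $\mathcal{P}$ the probability measures on its Borel $\sigma$-algebra. Fix $T\in\mathbb{N}$; $S=(S_t)_{t=0}^T$ ($\mathbb{R}^d$-valued) and $Y=(Y_t)_{t=0}^T$ ($\mathbb{R}^{\tilde d}$-valued, $Y_0$ constant) Borel processes with natural filtration $\mathbb{F}^{S,Y}$. Projective sets in a Polish space $Z$: $\Sigma^1_1$ analytic sets, $\Pi^1_n$ complements of $\Sigma^1_n$ sets, $\Sigma^1_{n+1}$ projections onto $Z$ of $\Pi^1_n$ subsets of $Z\times\mathbb{N}^{\mathbb{N}}$; projective $=\bigcup_n\Sigma^1_n$. $\mathbb{F}^{\mathrm{pr}}=(\mathcal{F}^{\mathrm{pr}}_t)$, $\mathcal{F}^{\mathrm{pr}}_t=\sigma((S_u,Y_u)^{-1}(L)\mid L\subseteq\mathbb{R}^{d+\tilde d}\text{ projective},u\le t)$. $\mathcal{H}(\mathbb{F}^{\mathrm{pr}})$: $\mathbb{R}^d$-valued $\mathbb{F}^{\mathrm{pr}}$-predictable processes $(H_t)_{t=1}^T$, $(H\circ S)_T=\sum_tH_t\cdot(S_t-S_{t-1})$. A One-Point Arbitrage on $\Omega$ is $H$ with $(H\circ S)_T\ge0$ on $\Omega$ and $>0$ at some $\omega\in\Omega$. $\mathcal{M}^f_\Omega$: finitely supported $Q\in\mathcal{P}$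 with support in $\Omega$ under which $S$ is an $\mathbb{F}^{S,Y}$-martingale; $\Omega^*=\{\omega\in\Omega\mid\exists Q\in\mathcal{M}^f_\Omega,Q(\{\omega\})>0\}$. *)

theory Defs
  imports "HOL-Analysis.Analysis" "HOL-Probability.Probability"
begin

text \<open>Alternating quantifier prefix over Baire-space elements: qpref n True P ys
  means  EX y_n ALL y_(n-1) EX ... . P ys  (n quantifiers, starting with EX),
  where the quantified elements are stored in the coordinates of ys.\<close>
fun qpref :: "nat \<Rightarrow> bool \<Rightarrow> ((nat \<Rightarrow> nat \<Rightarrow> nat) \<Rightarrow> bool) \<Rightarrow> (nat \<Rightarrow> nat \<Rightarrow> nat) \<Rightarrow> bool" where
  "qpref 0 b P ys = P ys"
| "qpref (Suc n) b P ys =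
     (if b then (\<exists>y::nat \<Rightarrow> nat. qpref n (\<not> b) P (ys(n := y)))
      else (\<forall>y::nat \<Rightarrow> nat. qpref n (\<not> b) P (ys(n := y))))"

text \<open>Sigma^1_n subsets (n >= 1) of a Polish space Z, in the standard normal form:
  A is Sigma^1_n iff A = {z. EX y1 ALL y2 ... (z, y1, ..., yn) in B} for a Borel set B
  of Z x (Baire space)^N (only the first n Baire coordinates being quantified).\<close>
definition Sigma1 :: "nat \<Rightarrow> 'a::polish_space set \<Rightarrow> bool" where
  "Sigma1 n A \<longleftrightarrow> 1 \<le> n \<and>
     (\<exists>B \<in> sets (borel :: ('a \<times> (nat \<Rightarrow> nat \<Rightarrow> nat)) measure).
        A = {z. qpref n True (\<lambda>ys. (z, ys) \<in> B) (\<lambda>_ _. 0)})"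

definition projective :: "'a::polish_space set \<Rightarrow> bool" where
  "projective A \<longleftrightarrow> (\<exists>n. Sigma1 n A)"

definition FSY :: "(nat \<Rightarrow> 'x \<Rightarrow> real^'d) \<Rightarrow> (nat \<Rightarrow> 'x \<Rightarrow> real^'e) \<Rightarrow> nat \<Rightarrow> 'x measure" where
  "FSY S Y t = sigma UNIV
     {{\<omega>. (S u \<omega>, Y u \<omega>) \<in> B} | u B. u \<le> t \<and> B \<in> sets (borel :: ((real^'d) \<times> (real^'e)) measure)}"

definition Fpr :: "(nat \<Rightarrow> 'x \<Rightarrow> real^'d) \<Rightarrow> (nat \<Rightarrow> 'x \<Rightarrow> real^'e) \<Rightarrow> nat \<Rightarrow> 'x measure" where
  "Fpr S Y t = sigma UNIV
     {{\<omega>. (S u \<omega>, Y u \<omega>) \<in> L} | u L. u \<le> t \<and> projective (L :: ((real^'d) \<times> (real^'e)) set)}"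

definition pr_predictable :: "(nat \<Rightarrow> 'x \<Rightarrow> real^'d) \<Rightarrow> (nat \<Rightarrow> 'x \<Rightarrow> real^'e) \<Rightarrow> nat
    \<Rightarrow> (nat \<Rightarrow> 'x \<Rightarrow> real^'d) \<Rightarrow> bool" where
  "pr_predictable S Y T H \<longleftrightarrow> (\<forall>t\<in>{1..T}. H t \<in> borel_measurable (Fpr S Y (t - 1)))"

definition gains :: "(nat \<Rightarrow> 'x \<Rightarrow> real^'d) \<Rightarrow> nat \<Rightarrow> (nat \<Rightarrow> 'x \<Rightarrow> real^'d) \<Rightarrow> 'x \<Rightarrow> real" where
  "gains S T H \<omega> = (\<Sum>t=1..T. H t \<omega> \<bullet> (S t \<omega> - S (t - 1) \<omega>))"

definition one_point_arbitrage :: "(nat \<Rightarrow> 'x \<Rightarrow> real^'d) \<Rightarrow> nat \<Rightarrow> 'x set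
    \<Rightarrow> (nat \<Rightarrow> 'x \<Rightarrow> real^'d) \<Rightarrow> bool" where
  "one_point_arbitrage S T \<Omega> H \<longleftrightarrow>
     (\<forall>\<omega>\<in>\<Omega>. gains S T H \<omega> \<ge> 0) \<and> (\<exists>\<omega>\<in>\<Omega>. gains S T H \<omega> > 0)"

text \<open>A finitely supported probability measure is represented as a pmf with finite support.
  S is an F^{S,Y}-martingale under Q: S_t is integrable and F^{S,Y}_t-measurable (automatic)
  and E_Q[1_A (S_{t+1} - S_t)] = 0 for every A in F^{S,Y}_t, t < T.\<close>
definition Mf :: "(nat \<Rightarrow> 'x \<Rightarrow> real^'d) \<Rightarrow> (nat \<Rightarrow> 'x \<Rightarrow> real^'e) \<Rightarrow> nat \<Rightarrow> 'x set \<Rightarrow> 'x pmf set" where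
  "Mf S Y T \<Omega> = {Q. finite (set_pmf Q) \<and> set_pmf Q \<subseteq> \<Omega> \<and>
      (\<forall>t\<le>T. integrable (measure_pmf Q) (S t)) \<and>
      (\<forall>t<T. \<forall>A\<in>sets (FSY S Y t).
         (\<integral>\<omega>. indicator A \<omega> *\<^sub>R (S (Suc t) \<omega> - S t \<omega>) \<partial>measure_pmf Q) = 0)}"

definition Omega_star :: "(nat \<Rightarrow> 'x \<Rightarrow> real^'d) \<Rightarrow> (nat \<Rightarrow> 'x \<Rightarrow> real^'e) \<Rightarrow> nat \<Rightarrow> 'x set \<Rightarrow> 'x set" where
  "Omega_star S Y T \<Omega> = {\<omega>\<in>\<Omega>. \<exists>Q\<in>Mf S Y T \<Omega>. pmf Q \<omega> > 0}"

end

theory Submission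
  imports Defs
begin

text \<open>Call node of \<open>\<omega>\<close> at time \<open>n\<close> the set of points of \<open>\<Omega>\<close> sharing the history
  \<open>(S u, Y u), u \<le> n\<close>, of \<open>\<omega>\<close>. If at some node the increments \<open>S (n + 1) - S n\<close> admit no
  strictly positive linear relation involving \<open>\<omega>\<close>, a supporting hyperplane at \<open>0\<close> of the cone
  they generate gives a vector \<open>h\<close> with \<open>h \<bullet> (S (n + 1) - S n) \<ge> 0\<close> on the node and \<open>> 0\<close>
  somewhere; holding \<open>h\<close> on that node in period \<open>n + 1\<close>, and nothing otherwise, is a one-point
  arbitrage. Otherwise the positive relations, normalised to probabilities and glued together by
  backward induction from \<open>T\<close> down to \<open>0\<close>, give for every \<open>\<omega>\<close> a finitely supported martingale
  measure charging \<open>\<omega>\<close>. Conversely, such a measure makes the expected gains of every predictable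
  strategy vanish, so no one-point arbitrage is positive at a point it charges.

  Nodes are atoms of the projective filtration because singletons are projective.\<close>

section \<open>Positive relations and a separating functional\<close>

definition has_positive_relation :: "('i \<Rightarrow> 'a::real_vector) \<Rightarrow> 'i set \<Rightarrow> 'i \<Rightarrow> bool" where
  "has_positive_relation f N i0 \<longleftrightarrow>
     (\<exists>F w. finite F \<and> F \<subseteq> N \<and> i0 \<in> F \<and> (\<forall>i\<in>F. 0 < w i) \<and> (\<Sum>i\<in>F. w i *\<^sub>R f i) = 0)"

definition nonneg_combinations :: "('i \<Rightarrow> 'a::real_vector) \<Rightarrow> 'i set \<Rightarrow> 'a set" where
  "nonneg_combinations f N = {\<Sum>i\<in>F. w i *\<^sub>R f i | F w.
     finite F \<and> F \<subseteq> N \<and> (\<forall>i. 0 \<le> w i) \<and> (\<forall>i. i \<notin> F \<longrightarrow> w i = 0)}"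

lemma nonneg_combinations_memI: "i \<in> N \<Longrightarrow> f i \<in> nonneg_combinations f N"
  unfolding nonneg_combinations_def
  by (intro CollectI exI[of _ "{i}"] exI[of _ "\<lambda>j. if j = i then 1 else 0"]) auto

lemma convex_cone_nonneg_combinations: "convex_cone (nonneg_combinations f N)"
  unfolding convex_cone_iff
proof (intro conjI ballI allI impI)
  show "0 \<in> nonneg_combinations f N"
    unfolding nonneg_combinations_def by (intro CollectI exI[of _ "{}"] exI[of _ "\<lambda>_. 0"]) auto
next
  fix x y assume "x \<in> nonneg_combinations f N" "y \<in> nonneg_combinations f N"
  then obtain F w G z where
    F: "finite F" "F \<subseteq> N" "\<forall>i. 0 \<le> w i" "\<forall>i. i \<notin> F \<longrightarrow> w i = 0" "x = (\<Sum>i\<in>F. w i *\<^sub>R f i)" and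
    G: "finite G" "G \<subseteq> N" "\<forall>i. 0 \<le> z i" "\<forall>i. i \<notin> G \<longrightarrow> z i = 0" "y = (\<Sum>i\<in>G. z i *\<^sub>R f i)"
    unfolding nonneg_combinations_def by blast
  have "x = (\<Sum>i\<in>F \<union> G. w i *\<^sub>R f i)" "y = (\<Sum>i\<in>F \<union> G. z i *\<^sub>R f i)"
    using F G by (auto intro: sum.mono_neutral_left)
  then have "x + y = (\<Sum>i\<in>F \<union> G. (w i + z i) *\<^sub>R f i)"
    by (simp add: scaleR_add_left sum.distrib)
  then show "x + y \<in> nonneg_combinations f N"
    unfolding nonneg_combinations_def using F G
    by (intro CollectI exI[of _ "F \<union> G"] exI[of _ "\<lambda>i. w i + z i"]) auto
next
  fix x and c :: real assume "x \<in> nonneg_combinations f N" "0 \<le> c"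
  then obtain F w where
    F: "finite F" "F \<subseteq> N" "\<forall>i. 0 \<le> w i" "\<forall>i. i \<notin> F \<longrightarrow> w i = 0" "x = (\<Sum>i\<in>F. w i *\<^sub>R f i)"
    unfolding nonneg_combinations_def by blast
  then have "c *\<^sub>R x = (\<Sum>i\<in>F. (c * w i) *\<^sub>R f i)" by (simp add: scaleR_sum_right)
  then show "c *\<^sub>R x \<in> nonneg_combinations f N"
    unfolding nonneg_combinations_def using F \<open>0 \<le> c\<close>
    by (intro CollectI exI[of _ F] exI[of _ "\<lambda>i. c * w i"]) auto
qed

lemma has_positive_relation_if_neg_mem:
  assumes "i0 \<in> N" and "- f i0 \<in> nonneg_combinations f N"
  shows "has_positive_relation f N i0"
proof -
  obtain F w where
    F: "finite F" "F \<subseteq> N" "\<forall>i. 0 \<le> w i" "\<forall>i. i \<notin> F \<longrightarrow> w i = 0" "- f i0 = (\<Sum>i\<in>F. w i *\<^sub>R f i)"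
    using assms(2) unfolding nonneg_combinations_def by blast
  define G where "G = insert i0 {i\<in>F. 0 < w i}"
  define v where "v i = w i + (if i = i0 then 1 else 0)" for i
  have "(\<Sum>i\<in>G. w i *\<^sub>R f i) = (\<Sum>i\<in>F. w i *\<^sub>R f i)"
    using F by (intro sum.mono_neutral_cong) (auto simp: G_def order_le_less)
  moreover have "(\<Sum>i\<in>G. v i *\<^sub>R f i) = (\<Sum>i\<in>G. w i *\<^sub>R f i) + (\<Sum>i\<in>G. if i = i0 then f i else 0)"
    unfolding v_def scaleR_add_left sum.distrib by (intro arg_cong2[where f = "(+)"] sum.cong) auto
  moreover have "(\<Sum>i\<in>G. if i = i0 then f i else 0) = f i0"
    using F(1) by (simp add: G_def)
  ultimately have "(\<Sum>i\<in>G. v i *\<^sub>R f i) = 0"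
    by (simp add: F(5)[symmetric])
  moreover have "\<forall>i\<in>G. 0 < v i"
    using F(3) by (auto simp: G_def v_def add_nonneg_pos)
  ultimately show ?thesis
    unfolding has_positive_relation_def using F(1,2) assms(1)
    by (intro exI[of _ G] exI[of _ v]) (auto simp: G_def)
qed

lemma zero_notin_rel_interior_nonneg_combinations:
  fixes f :: "'i \<Rightarrow> 'a::euclidean_space"
  assumes i0: "i0 \<in> N" and no_relation: "\<not> has_positive_relation f N i0"
  shows "0 \<notin> rel_interior (nonneg_combinations f N)"
proof
  let ?C = "nonneg_combinations f N"
  have cone: "convex_cone ?C" by (rule convex_cone_nonneg_combinations)
  then have convex: "convex ?C" by (simp add: convex_cone_def)
  assume "0 \<in> rel_interior ?C"
  with convex have "\<forall>x\<in>affine hull ?C. \<exists>e > 1. (1 - e) *\<^sub>R x + e *\<^sub>R 0 \<in> ?C"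
    by (rule convex_rel_interior_if2)
  moreover have "f i0 \<in> affine hull ?C"
    by (rule hull_inc[OF nonneg_combinations_memI[OF i0]])
  ultimately have "\<exists>e > 1. (1 - e) *\<^sub>R f i0 + e *\<^sub>R 0 \<in> ?C"
    by (rule bspec)
  then obtain e where e: "e > 1" and mem: "(1 - e) *\<^sub>R f i0 \<in> ?C"
    by auto
  from mem have "(1 / (e - 1)) *\<^sub>R ((1 - e) *\<^sub>R f i0) \<in> ?C"
    by (rule convex_cone_scaleR[OF cone, rotated]) (use e in simp)
  moreover have "(1 - e) / (e - 1) = -1"
    using e by (simp add: divide_eq_eq)
  ultimately have "has_positive_relation f N i0"
    using has_positive_relation_if_neg_mem[OF i0] by simp
  with no_relation show False by contradiction
qed

lemma nonneg_functional_if_no_positive_relation: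
  fixes f :: "'i \<Rightarrow> 'a::euclidean_space"
  assumes "i0 \<in> N" and "\<not> has_positive_relation f N i0"
  obtains h where "\<forall>i\<in>N. 0 \<le> h \<bullet> f i" and "\<exists>i\<in>N. 0 < h \<bullet> f i"
proof -
  let ?C = "nonneg_combinations f N"
  have "convex_cone ?C" by (rule convex_cone_nonneg_combinations)
  then have convex: "convex ?C" and zero: "0 \<in> ?C"
    by (simp_all add: convex_cone_def convex_cone_contains_0)
  obtain h where "h \<noteq> 0" and "\<And>y. y \<in> ?C \<Longrightarrow> h \<bullet> 0 \<le> h \<bullet> y"
    and "\<And>y. y \<in> rel_interior ?C \<Longrightarrow> h \<bullet> 0 < h \<bullet> y"
    using zero_notin_rel_interior_nonneg_combinations[OF assms]
    by (erule supporting_hyperplane_rel_boundary[OF convex zero])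
  then have h_nonneg: "\<And>y. y \<in> ?C \<Longrightarrow> 0 \<le> h \<bullet> y"
    and h_pos: "\<And>y. y \<in> rel_interior ?C \<Longrightarrow> 0 < h \<bullet> y"
    by simp_all
  have "\<exists>i\<in>N. 0 < h \<bullet> f i"
  proof (rule ccontr)
    assume "\<not> ?thesis"
    then have h_zero: "h \<bullet> f i = 0" if "i \<in> N" for i
      using h_nonneg[OF nonneg_combinations_memI[OF that]] that by (simp add: not_less order_antisym)
    have "h \<bullet> y = 0" if "y \<in> ?C" for y
    proof -
      obtain F w where "F \<subseteq> N" "y = (\<Sum>i\<in>F. w i *\<^sub>R f i)"
        using \<open>y \<in> ?C\<close> unfolding nonneg_combinations_def by blast
      then have "h \<bullet> y = (\<Sum>i\<in>F. w i * (h \<bullet> f i))"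
        by (simp add: inner_sum_right)
      also have "\<dots> = 0"
        using \<open>F \<subseteq> N\<close> h_zero by (intro sum.neutral) auto
      finally show ?thesis .
    qed
    moreover obtain y where y: "y \<in> rel_interior ?C"
      using rel_interior_eq_empty[OF convex] zero by blast
    ultimately have "h \<bullet> y = 0"
      using rel_interior_subset by blast
    with h_pos[OF y] show False by simp
  qed
  moreover have "\<forall>i\<in>N. 0 \<le> h \<bullet> f i"
    by (simp add: h_nonneg nonneg_combinations_memI)
  ultimately show thesis by (rule that[rotated])
qed

section \<open>Histories and the two filtrations\<close>

definition history :: "(nat \<Rightarrow> 'x \<Rightarrow> 'a) \<Rightarrow> (nat \<Rightarrow> 'x \<Rightarrow> 'b) \<Rightarrow> nat \<Rightarrow> 'x \<Rightarrow> ('a \<times> 'b) list" where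
  "history S Y t \<omega> = map (\<lambda>u. (S u \<omega>, Y u \<omega>)) [0..<Suc t]"

lemma history_eq_iff:
  "history S Y t a = history S Y t b \<longleftrightarrow> (\<forall>u\<le>t. S u a = S u b \<and> Y u a = Y u b)"
  unfolding history_def map_eq_conv by (auto simp: less_Suc_eq_le)

lemma history_eq_mono:
  "s \<le> t \<Longrightarrow> history S Y t a = history S Y t b \<Longrightarrow> history S Y s a = history S Y s b"
  by (auto simp: history_eq_iff)

definition history_sigma :: "(nat \<Rightarrow> 'x \<Rightarrow> 'a) \<Rightarrow> (nat \<Rightarrow> 'x \<Rightarrow> 'b) \<Rightarrow> nat
    \<Rightarrow> (('a \<times> 'b) set \<Rightarrow> bool) \<Rightarrow> 'x measure" where
  "history_sigma S Y t P = sigma UNIV {{\<omega>. (S u \<omega>, Y u \<omega>) \<in> B} | u B. u \<le> t \<and> P B}"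

lemma FSY_eq_history_sigma: "FSY S Y t = history_sigma S Y t (\<lambda>B. B \<in> sets borel)"
  unfolding FSY_def history_sigma_def ..

lemma Fpr_eq_history_sigma: "Fpr S Y t = history_sigma S Y t projective"
  unfolding Fpr_def history_sigma_def ..

lemma history_sigma_saturated:
  assumes "A \<in> sets (history_sigma S Y t P)" and "history S Y t a = history S Y t b"
  shows "a \<in> A \<longleftrightarrow> b \<in> A"
proof -
  have "A \<in> sigma_sets UNIV {{\<omega>. (S u \<omega>, Y u \<omega>) \<in> B} | u B. u \<le> t \<and> P B}"
    using assms(1) unfolding history_sigma_def by (simp add: sets_measure_of)
  then show ?thesis
    by induct (use assms(2) in \<open>auto simp: history_eq_iff\<close>)
qed

lemma history_node_in_history_sigma:
  assumes "\<And>c. P {c}"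
  shows "{a. history S Y t a = history S Y t b} \<in> sets (history_sigma S Y t P)"
proof -
  have "{a. history S Y t a = history S Y t b} = (\<Inter>u\<in>{..t}. {\<omega>. (S u \<omega>, Y u \<omega>) \<in> {(S u b, Y u b)}})"
    by (auto simp: history_eq_iff)
  also have "\<dots> \<in> sets (history_sigma S Y t P)"
  proof (rule sets.finite_INT)
    fix u assume "u \<in> {..t}"
    then have "{\<omega>. (S u \<omega>, Y u \<omega>) \<in> {(S u b, Y u b)}}
        \<in> {{\<omega>. (S u \<omega>, Y u \<omega>) \<in> B} | u B. u \<le> t \<and> P B}"
      using assms by blast
    then show "{\<omega>. (S u \<omega>, Y u \<omega>) \<in> {(S u b, Y u b)}} \<in> sets (history_sigma S Y t P)"
      unfolding history_sigma_def by (auto simp: sets_measure_of intro: sigma_sets.Basic)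
  qed auto
  finally show ?thesis .
qed

lemma history_sigma_measurable_const:
  fixes f :: "'x \<Rightarrow> 'c::t1_space"
  assumes "f \<in> borel_measurable (history_sigma S Y t P)" and "history S Y t a = history S Y t b"
  shows "f a = f b"
proof -
  have "space (history_sigma S Y t P) = UNIV"
    unfolding history_sigma_def by (simp add: space_measure_of_conv)
  with assms(1) have "f -` {f a} \<in> sets (history_sigma S Y t P)"
    using measurable_sets[OF assms(1) borel_closed[OF closed_singleton]] by simp
  from history_sigma_saturated[OF this assms(2)] show ?thesis by simp
qed

lemma projective_singleton: "projective {c::'a::polish_space}"
  unfolding projective_def Sigma1_def
proof (intro exI[of _ 1] conjI bexI)
  show "{c} \<times> UNIV \<in> sets (borel :: ('a \<times> (nat \<Rightarrow> nat \<Rightarrow> nat)) measure)"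
    by (intro borel_closed closed_Times closed_singleton closed_UNIV)
qed simp_all

section \<open>Finitely supported martingale weights\<close>

lemma sum_fibrewise_linear_eq_0:
  fixes v :: "'x \<Rightarrow> 'a::real_vector" and L :: "'x \<Rightarrow> 'a \<Rightarrow> 'b::real_vector"
  assumes D: "finite D" and linear: "\<And>a. a \<in> D \<Longrightarrow> linear (L a)"
    and L_const: "\<And>a b. a \<in> D \<Longrightarrow> b \<in> D \<Longrightarrow> g a = g b \<Longrightarrow> L a = L b"
    and fibre_sum: "\<And>b. b \<in> D \<Longrightarrow> (\<Sum>a\<in>{a\<in>D. g a = g b}. v a) = 0"
  shows "(\<Sum>a\<in>D. L a (v a)) = 0"
proof -
  have fibre_zero: "(\<Sum>a\<in>{a\<in>D. g a = g b}. L a (v a)) = 0" if b: "b \<in> D" for b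
  proof -
    have "(\<Sum>a\<in>{a\<in>D. g a = g b}. L a (v a)) = (\<Sum>a\<in>{a\<in>D. g a = g b}. L b (v a))"
    proof (rule sum.cong[OF refl])
      fix a assume "a \<in> {a\<in>D. g a = g b}"
      with b have "L a = L b" by (blast intro: L_const)
      then show "L a (v a) = L b (v a)" by simp
    qed
    also have "\<dots> = L b (\<Sum>a\<in>{a\<in>D. g a = g b}. v a)"
      using linear[OF b] by (simp add: linear_sum o_def)
    also have "\<dots> = 0"
      using linear[OF b] fibre_sum[OF b] by (simp add: linear_0)
    finally show ?thesis .
  qed
  have "(\<Sum>a\<in>D. L a (v a)) = (\<Sum>y\<in>g ` D. \<Sum>a\<in>{a\<in>D. g a = y}. L a (v a))"
    by (rule sum.group[OF D finite_imageI[OF D] subset_refl, symmetric])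
  also have "\<dots> = 0"
    using fibre_zero by (intro sum.neutral) blast
  finally show ?thesis .
qed

definition prob_weights :: "('x \<Rightarrow> real) \<Rightarrow> 'x set \<Rightarrow> bool" where
  "prob_weights p E \<longleftrightarrow> finite E \<and> (\<forall>a. 0 \<le> p a) \<and> (\<forall>a. a \<notin> E \<longrightarrow> p a = 0) \<and> sum p E = 1"

lemma sum_prob_weights_const:
  fixes G :: "'x \<Rightarrow> 'v::real_vector"
  assumes "prob_weights p E" and "\<And>a. a \<in> E \<Longrightarrow> G a = c"
  shows "(\<Sum>a\<in>E. p a *\<^sub>R G a) = c"
proof -
  have "(\<Sum>a\<in>E. p a *\<^sub>R G a) = (\<Sum>a\<in>E. p a) *\<^sub>R c"
    using assms(2) by (simp add: scaleR_sum_left)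
  then show ?thesis
    using assms(1) by (simp add: prob_weights_def)
qed

lemma sum_mixture:
  fixes G :: "'x \<Rightarrow> 'v::real_vector"
  assumes F: "finite F" and weights: "\<And>i. i \<in> F \<Longrightarrow> prob_weights (pp i) (EE i)"
  shows "(\<Sum>a\<in>(\<Union>i\<in>F. EE i). (\<Sum>i\<in>F. w i * pp i a) *\<^sub>R G a)
       = (\<Sum>i\<in>F. w i *\<^sub>R (\<Sum>a\<in>EE i. pp i a *\<^sub>R G a))"
proof -
  have finite: "finite (\<Union>i\<in>F. EE i)"
    using F weights by (simp add: prob_weights_def)
  have "(\<Sum>a\<in>(\<Union>i\<in>F. EE i). (\<Sum>i\<in>F. w i * pp i a) *\<^sub>R G a)
      = (\<Sum>a\<in>(\<Union>i\<in>F. EE i). \<Sum>i\<in>F. (w i * pp i a) *\<^sub>R G a)"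
    by (simp add: scaleR_sum_left)
  also have "\<dots> = (\<Sum>i\<in>F. \<Sum>a\<in>(\<Union>i\<in>F. EE i). (w i * pp i a) *\<^sub>R G a)"
    by (rule sum.swap)
  also have "\<dots> = (\<Sum>i\<in>F. w i *\<^sub>R (\<Sum>a\<in>(\<Union>i\<in>F. EE i). pp i a *\<^sub>R G a))"
    by (simp add: scaleR_sum_right)
  also have "\<dots> = (\<Sum>i\<in>F. w i *\<^sub>R (\<Sum>a\<in>EE i. pp i a *\<^sub>R G a))"
  proof (rule sum.cong[OF refl])
    fix i assume "i \<in> F"
    with weights have "(\<Sum>a\<in>(\<Union>i\<in>F. EE i). pp i a *\<^sub>R G a) = (\<Sum>a\<in>EE i. pp i a *\<^sub>R G a)"
      by (intro sum.mono_neutral_right[OF finite]) (auto simp: prob_weights_def)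
    then show "w i *\<^sub>R (\<Sum>a\<in>(\<Union>i\<in>F. EE i). pp i a *\<^sub>R G a) = w i *\<^sub>R (\<Sum>a\<in>EE i. pp i a *\<^sub>R G a)"
      by simp
  qed
  finally show ?thesis .
qed

lemma prob_weights_mixture:
  assumes F: "finite F" and weights: "\<And>i. i \<in> F \<Longrightarrow> prob_weights (pp i) (EE i)"
    and w: "\<And>i. i \<in> F \<Longrightarrow> 0 \<le> w i" "sum w F = 1"
  shows "prob_weights (\<lambda>a. \<Sum>i\<in>F. w i * pp i a) (\<Union>i\<in>F. EE i)"
proof -
  have "(\<Sum>a\<in>(\<Union>i\<in>F. EE i). \<Sum>i\<in>F. w i * pp i a) = (\<Sum>i\<in>F. w i * (\<Sum>a\<in>EE i. pp i a))"
    using sum_mixture[OF F weights, where w = w and G = "\<lambda>_. 1::real"] by simp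
  also have "\<dots> = 1"
    using w weights by (simp add: prob_weights_def)
  finally show ?thesis
    using F weights w unfolding prob_weights_def by (auto intro!: sum_nonneg)
qed

lemma embed_pmf_prob_weights:
  assumes "prob_weights p E"
  shows "pmf (embed_pmf p) a = p a" and "set_pmf (embed_pmf p) \<subseteq> E"
proof -
  have nonneg: "\<And>a. 0 \<le> p a" and finite: "finite E" and outside: "\<And>a. a \<notin> E \<Longrightarrow> p a = 0"
    using assms by (auto simp: prob_weights_def)
  have "(\<integral>\<^sup>+a. ennreal (p a) \<partial>count_space UNIV) = (\<Sum>a\<in>E. ennreal (p a))"
    using finite outside by (intro nn_integral_count_space') auto
  also have "\<dots> = 1"
    using assms nonneg by (simp add: prob_weights_def)
  finally have total: "(\<integral>\<^sup>+a. ennreal (p a) \<partial>count_space UNIV) = 1" .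
  show "pmf (embed_pmf p) a = p a"
    by (rule pmf_embed_pmf[OF nonneg total])
  show "set_pmf (embed_pmf p) \<subseteq> E"
    using outside by (auto simp: set_embed_pmf[OF nonneg total])
qed

definition martingale_from :: "(nat \<Rightarrow> 'x \<Rightarrow> 'v::real_vector) \<Rightarrow> (nat \<Rightarrow> 'x \<Rightarrow> 'y) \<Rightarrow> nat \<Rightarrow> nat
    \<Rightarrow> ('x \<Rightarrow> real) \<Rightarrow> 'x set \<Rightarrow> bool" where
  "martingale_from S Y T t p E \<longleftrightarrow> (\<forall>s b. t \<le> s \<longrightarrow> s < T \<longrightarrow>
     (\<Sum>a\<in>{a\<in>E. history S Y s a = history S Y s b}. p a *\<^sub>R (S (Suc s) a - S s a)) = 0)"

lemma martingale_from_mixture: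
  assumes F: "finite F" and weights: "\<And>i. i \<in> F \<Longrightarrow> prob_weights (pp i) (EE i)"
    and martingale: "\<And>i. i \<in> F \<Longrightarrow> martingale_from S Y T t (pp i) (EE i)"
  shows "martingale_from S Y T t (\<lambda>a. \<Sum>i\<in>F. w i * pp i a) (\<Union>i\<in>F. EE i)"
  unfolding martingale_from_def
proof (intro allI impI)
  fix s b assume s: "t \<le> s" "s < T"
  define G where "G a = (if history S Y s a = history S Y s b then S (Suc s) a - S s a else 0)" for a
  have restrict: "(\<Sum>a\<in>{a\<in>A. history S Y s a = history S Y s b}. q a *\<^sub>R (S (Suc s) a - S s a))
      = (\<Sum>a\<in>A. q a *\<^sub>R G a)" if "finite A" for A q
    using that by (simp add: sum.inter_filter G_def if_distrib[of "(*\<^sub>R) _"] cong: if_cong)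
  have finite: "finite (\<Union>i\<in>F. EE i)" "\<And>i. i \<in> F \<Longrightarrow> finite (EE i)"
    using F weights by (auto simp: prob_weights_def)
  have "(\<Sum>a\<in>{a\<in>(\<Union>i\<in>F. EE i). history S Y s a = history S Y s b}.
      (\<Sum>i\<in>F. w i * pp i a) *\<^sub>R (S (Suc s) a - S s a))
      = (\<Sum>a\<in>(\<Union>i\<in>F. EE i). (\<Sum>i\<in>F. w i * pp i a) *\<^sub>R G a)"
    by (rule restrict[OF finite(1)])
  also have "\<dots> = (\<Sum>i\<in>F. w i *\<^sub>R (\<Sum>a\<in>EE i. pp i a *\<^sub>R G a))"
    by (rule sum_mixture[OF F weights])
  also have "\<dots> = 0"
    using martingale s finite(2) by (simp add: restrict[symmetric] martingale_from_def)
  finally show "(\<Sum>a\<in>{a\<in>(\<Union>i\<in>F. EE i). history S Y s a = history S Y s b}.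
      (\<Sum>i\<in>F. w i * pp i a) *\<^sub>R (S (Suc s) a - S s a)) = 0" .
qed

lemma martingale_from_Suc:
  assumes "martingale_from S Y T (Suc n) p E"
    and node: "\<And>a. a \<in> E \<Longrightarrow> history S Y n a = history S Y n \<omega>"
    and balance: "(\<Sum>a\<in>E. p a *\<^sub>R (S (Suc n) a - S n a)) = 0"
  shows "martingale_from S Y T n p E"
  unfolding martingale_from_def
proof (intro allI impI)
  fix s b assume "n \<le> s" "s < T"
  show "(\<Sum>a\<in>{a\<in>E. history S Y s a = history S Y s b}. p a *\<^sub>R (S (Suc s) a - S s a)) = 0"
  proof (cases "s = n")
    case True
    have "{a\<in>E. history S Y n a = history S Y n b} = (if history S Y n b = history S Y n \<omega> then E else {})"
      using node by auto
    with True balance show ?thesis by simp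
  next
    case False
    with \<open>n \<le> s\<close> \<open>s < T\<close> assms(1) show ?thesis
      by (simp add: martingale_from_def)
  qed
qed

definition node_martingale :: "(nat \<Rightarrow> 'x \<Rightarrow> 'v::real_vector) \<Rightarrow> (nat \<Rightarrow> 'x \<Rightarrow> 'y) \<Rightarrow> nat \<Rightarrow> 'x set
    \<Rightarrow> nat \<Rightarrow> 'x \<Rightarrow> ('x \<Rightarrow> real) \<Rightarrow> 'x set \<Rightarrow> bool" where
  "node_martingale S Y T \<Omega> t \<omega> p E \<longleftrightarrow> prob_weights p E \<and>
     E \<subseteq> {a\<in>\<Omega>. history S Y t a = history S Y t \<omega>} \<and> 0 < p \<omega> \<and> martingale_from S Y T t p E"

lemma node_martingale_horizon:
  assumes "\<omega> \<in> \<Omega>"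
  shows "node_martingale S Y T \<Omega> T \<omega> (\<lambda>a. if a = \<omega> then 1 else 0) {\<omega>}"
  using assms unfolding node_martingale_def prob_weights_def martingale_from_def by simp

lemma node_martingale_mixture:
  fixes S :: "nat \<Rightarrow> 'x \<Rightarrow> 'v::real_vector"
  assumes F: "finite F" "F \<subseteq> {a\<in>\<Omega>. history S Y n a = history S Y n \<omega>}" "\<omega> \<in> F"
    and v_pos: "\<And>i. i \<in> F \<Longrightarrow> 0 < v i" and v_sum: "sum v F = 1"
    and balance: "(\<Sum>i\<in>F. v i *\<^sub>R (S (Suc n) i - S n i)) = 0"
    and pp: "\<And>i. i \<in> F \<Longrightarrow> node_martingale S Y T \<Omega> (Suc n) i (pp i) (EE i)"
  shows "node_martingale S Y T \<Omega> n \<omega> (\<lambda>a. \<Sum>i\<in>F. v i * pp i a) (\<Union>i\<in>F. EE i)"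
proof -
  define p where "p a = (\<Sum>i\<in>F. v i * pp i a)" for a
  define E where "E = (\<Union>i\<in>F. EE i)"
  have weights: "\<And>i. i \<in> F \<Longrightarrow> prob_weights (pp i) (EE i)"
    using pp by (simp add: node_martingale_def)
  have "prob_weights p E"
    unfolding p_def E_def using F(1) weights v_pos v_sum
    by (intro prob_weights_mixture) (auto intro: less_imp_le)
  moreover have node: "E \<subseteq> {a\<in>\<Omega>. history S Y n a = history S Y n \<omega>}"
  proof
    fix a assume "a \<in> E"
    then obtain i where i: "i \<in> F" "a \<in> EE i" unfolding E_def by blast
    then have "a \<in> \<Omega>" "history S Y (Suc n) a = history S Y (Suc n) i"
      using pp[OF i(1)] by (auto simp: node_martingale_def)
    moreover have "history S Y n i = history S Y n \<omega>"
      using F(2) i(1) by blast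
    ultimately show "a \<in> {a\<in>\<Omega>. history S Y n a = history S Y n \<omega>}"
      using history_eq_mono[of n "Suc n" S Y a i] by simp
  qed
  moreover have "0 < p \<omega>"
    unfolding p_def
  proof (rule sum_pos2[OF F(1) F(3)])
    show "0 < v \<omega> * pp \<omega> \<omega>"
      using v_pos[OF F(3)] pp[OF F(3)] by (simp add: node_martingale_def)
    show "0 \<le> v i * pp i \<omega>" if "i \<in> F" for i
      using v_pos[OF that] weights[OF that] by (simp add: prob_weights_def)
  qed
  moreover have "martingale_from S Y T n p E"
  proof (rule martingale_from_Suc)
    show "martingale_from S Y T (Suc n) p E"
      unfolding p_def E_def using F(1) weights pp
      by (intro martingale_from_mixture) (auto simp: node_martingale_def)
    show "history S Y n a = history S Y n \<omega>" if "a \<in> E" for a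
      using node that by blast
    \<comment> \<open>the increment \<open>S (Suc n) - S n\<close> is constant on each successor node \<open>EE i\<close>\<close>
    have "(\<Sum>a\<in>EE i. pp i a *\<^sub>R (S (Suc n) a - S n a)) = S (Suc n) i - S n i" if "i \<in> F" for i
      using pp[OF that] weights[OF that]
      by (intro sum_prob_weights_const) (auto simp: node_martingale_def history_eq_iff)
    then have "(\<Sum>a\<in>E. p a *\<^sub>R (S (Suc n) a - S n a)) = (\<Sum>i\<in>F. v i *\<^sub>R (S (Suc n) i - S n i))"
      unfolding p_def E_def by (simp add: sum_mixture[OF F(1) weights])
    with balance show "(\<Sum>a\<in>E. p a *\<^sub>R (S (Suc n) a - S n a)) = 0"
      by simp
  qed
  ultimately show ?thesis
    unfolding node_martingale_def p_def E_def by blast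
qed

lemma node_martingale_step:
  fixes S :: "nat \<Rightarrow> 'x \<Rightarrow> 'v::real_vector"
  assumes relation: "has_positive_relation (\<lambda>a. S (Suc n) a - S n a)
      {a\<in>\<Omega>. history S Y n a = history S Y n \<omega>} \<omega>"
    and successors: "\<And>i. i \<in> \<Omega> \<Longrightarrow> \<exists>p E. node_martingale S Y T \<Omega> (Suc n) i p E"
  shows "\<exists>p E. node_martingale S Y T \<Omega> n \<omega> p E"
proof -
  obtain F w where F: "finite F" "F \<subseteq> {a\<in>\<Omega>. history S Y n a = history S Y n \<omega>}" "\<omega> \<in> F"
    and w_pos: "\<And>i. i \<in> F \<Longrightarrow> 0 < w i"
    and balance: "(\<Sum>i\<in>F. w i *\<^sub>R (S (Suc n) i - S n i)) = 0"
    using relation unfolding has_positive_relation_def by blast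
  obtain pp EE where pp: "\<And>i. i \<in> F \<Longrightarrow> node_martingale S Y T \<Omega> (Suc n) i (pp i) (EE i)"
    using successors F(2) bchoice[of F "\<lambda>i (p, E). node_martingale S Y T \<Omega> (Suc n) i p E"]
    by (fastforce simp: split_beta)
  define v where "v i = w i / sum w F" for i
  have "0 < sum w F"
    using F(1,3) w_pos by (intro sum_pos2[of F \<omega>]) (auto intro: less_imp_le)
  then have "\<And>i. i \<in> F \<Longrightarrow> 0 < v i" and "sum v F = 1"
    using w_pos by (simp_all add: v_def sum_divide_distrib[symmetric])
  moreover have "(\<Sum>i\<in>F. v i *\<^sub>R (S (Suc n) i - S n i))
      = (1 / sum w F) *\<^sub>R (\<Sum>i\<in>F. w i *\<^sub>R (S (Suc n) i - S n i))"
    by (simp add: v_def scaleR_sum_right)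
  then have "(\<Sum>i\<in>F. v i *\<^sub>R (S (Suc n) i - S n i)) = 0"
    using balance by simp
  ultimately show ?thesis
    using node_martingale_mixture[OF F _ _ _ pp] by blast
qed

lemma node_martingale_exists:
  fixes S :: "nat \<Rightarrow> 'x \<Rightarrow> 'v::real_vector"
  assumes relations: "\<And>n \<omega>. n < T \<Longrightarrow> \<omega> \<in> \<Omega> \<Longrightarrow>
      has_positive_relation (\<lambda>a. S (Suc n) a - S n a) {a\<in>\<Omega>. history S Y n a = history S Y n \<omega>} \<omega>"
    and "t \<le> T"
  shows "\<forall>\<omega>\<in>\<Omega>. \<exists>p E. node_martingale S Y T \<Omega> t \<omega> p E"
  using \<open>t \<le> T\<close>
proof (induction t rule: inc_induct)
  case base
  show ?case
  proof
    fix \<omega> assume "\<omega> \<in> \<Omega>"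
    from node_martingale_horizon[OF this]
    show "\<exists>p E. node_martingale S Y T \<Omega> T \<omega> p E" by blast
  qed
next
  case (step n)
  show ?case
  proof
    fix \<omega> assume "\<omega> \<in> \<Omega>"
    show "\<exists>p E. node_martingale S Y T \<Omega> n \<omega> p E"
      by (rule node_martingale_step[OF relations[OF step.hyps(2) \<open>\<omega> \<in> \<Omega>\<close>]])
        (use step.IH in blast)
  qed
qed

lemma Mf_of_node_martingale:
  fixes S :: "nat \<Rightarrow> 'x \<Rightarrow> real^'d" and Y :: "nat \<Rightarrow> 'x \<Rightarrow> real^'e"
  assumes "node_martingale S Y T \<Omega> 0 \<omega> p E"
  shows "\<exists>Q\<in>Mf S Y T \<Omega>. 0 < pmf Q \<omega>"
proof -
  have prob: "prob_weights p E" and node: "E \<subseteq> \<Omega>" and pos: "0 < p \<omega>"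
    and martingale: "martingale_from S Y T 0 p E"
    using assms by (auto simp: node_martingale_def)
  then have finite: "finite E" by (simp add: prob_weights_def)
  define Q where "Q = embed_pmf p"
  have pmf_Q: "pmf Q a = p a" for a
    unfolding Q_def by (rule embed_pmf_prob_weights(1)[OF prob])
  have support: "set_pmf Q \<subseteq> E"
    unfolding Q_def by (rule embed_pmf_prob_weights(2)[OF prob])
  have "(\<integral>a. indicator A a *\<^sub>R (S (Suc t) a - S t a) \<partial>measure_pmf Q) = 0"
    if "t < T" "A \<in> sets (FSY S Y t)" for t A
  proof -
    have "(\<integral>a. indicator A a *\<^sub>R (S (Suc t) a - S t a) \<partial>measure_pmf Q)
        = (\<Sum>a\<in>E. indicator A a *\<^sub>R (p a *\<^sub>R (S (Suc t) a - S t a)))"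
      using finite support by (subst integral_measure_pmf[OF finite]) (auto simp: pmf_Q mult.commute)
    also have "\<dots> = 0"
    proof (rule sum_fibrewise_linear_eq_0[OF finite, where g = "history S Y t"
          and L = "\<lambda>a x. indicator A a *\<^sub>R x" and v = "\<lambda>a. p a *\<^sub>R (S (Suc t) a - S t a)"])
      show "linear (\<lambda>x. indicator A a *\<^sub>R x)" for a
        by (rule linear_scaleR)
      show "(\<lambda>x. indicator A a *\<^sub>R x) = (\<lambda>x. indicator A b *\<^sub>R x)"
        if "history S Y t a = history S Y t b" for a b
        using history_sigma_saturated[OF \<open>A \<in> sets (FSY S Y t)\<close>[unfolded FSY_eq_history_sigma] that]
        by (simp add: indicator_def)
      show "(\<Sum>a\<in>{a\<in>E. history S Y t a = history S Y t b}. p a *\<^sub>R (S (Suc t) a - S t a)) = 0" for b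
        using martingale \<open>t < T\<close> by (simp add: martingale_from_def)
    qed
    finally show ?thesis .
  qed
  then have "Q \<in> Mf S Y T \<Omega>"
    using finite support node unfolding Mf_def
    by (auto intro: finite_subset integrable_measure_pmf_finite)
  moreover have "0 < pmf Q \<omega>"
    using pos by (simp add: pmf_Q)
  ultimately show ?thesis by blast
qed

section \<open>One-point arbitrage\<close>

lemma Mf_node_increment_sum_eq_0:
  fixes S :: "nat \<Rightarrow> 'x \<Rightarrow> real^'d" and Y :: "nat \<Rightarrow> 'x \<Rightarrow> real^'e"
  assumes Q: "Q \<in> Mf S Y T \<Omega>" and "s < T"
  shows "(\<Sum>a\<in>{a\<in>set_pmf Q. history S Y s a = history S Y s b}. pmf Q a *\<^sub>R (S (Suc s) a - S s a)) = 0"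
proof -
  let ?A = "{a. history S Y s a = history S Y s b}"
  have finite: "finite (set_pmf Q)"
    using Q by (simp add: Mf_def)
  have "?A \<in> sets (FSY S Y s)"
    unfolding FSY_eq_history_sigma by (rule history_node_in_history_sigma) simp
  with Q \<open>s < T\<close> have "(\<integral>a. indicator ?A a *\<^sub>R (S (Suc s) a - S s a) \<partial>measure_pmf Q) = 0"
    by (simp add: Mf_def)
  moreover have "(\<integral>a. indicator ?A a *\<^sub>R (S (Suc s) a - S s a) \<partial>measure_pmf Q)
      = (\<Sum>a\<in>set_pmf Q. pmf Q a *\<^sub>R (indicator ?A a *\<^sub>R (S (Suc s) a - S s a)))"
    by (rule integral_measure_pmf[OF finite]) simp
  moreover have "\<dots> = (\<Sum>a\<in>{a\<in>set_pmf Q. history S Y s a = history S Y s b}.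
      pmf Q a *\<^sub>R (S (Suc s) a - S s a))"
    by (subst sum.inter_filter[OF finite]) (auto simp: indicator_def intro!: sum.cong)
  ultimately show ?thesis by simp
qed

lemma expected_gains_eq_0:
  fixes S :: "nat \<Rightarrow> 'x \<Rightarrow> real^'d" and Y :: "nat \<Rightarrow> 'x \<Rightarrow> real^'e"
  assumes Q: "Q \<in> Mf S Y T \<Omega>" and H: "pr_predictable S Y T H"
  shows "(\<Sum>a\<in>set_pmf Q. pmf Q a * gains S T H a) = 0"
proof -
  have finite: "finite (set_pmf Q)"
    using Q by (simp add: Mf_def)
  have period_zero: "(\<Sum>a\<in>set_pmf Q. pmf Q a * (H (Suc s) a \<bullet> (S (Suc s) a - S s a))) = 0"
    if "s < T" for s
  proof -
    have "Suc s \<in> {1..T}"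
      using \<open>s < T\<close> by simp
    with H have "H (Suc s) \<in> borel_measurable (Fpr S Y (Suc s - 1))"
      unfolding pr_predictable_def by (rule bspec)
    then have measurable: "H (Suc s) \<in> borel_measurable (history_sigma S Y s projective)"
      by (simp add: Fpr_eq_history_sigma)
    have "(\<Sum>a\<in>set_pmf Q. H (Suc s) a \<bullet> (pmf Q a *\<^sub>R (S (Suc s) a - S s a))) = 0"
    proof (rule sum_fibrewise_linear_eq_0[OF finite, where g = "history S Y s"
            and L = "\<lambda>a x. H (Suc s) a \<bullet> x" and v = "\<lambda>a. pmf Q a *\<^sub>R (S (Suc s) a - S s a)"])
      show "linear (\<lambda>x. H (Suc s) a \<bullet> x)" for a
        by (rule bounded_linear.linear[OF bounded_linear_inner_right])
      show "(\<lambda>x. H (Suc s) a \<bullet> x) = (\<lambda>x. H (Suc s) b \<bullet> x)"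
        if "history S Y s a = history S Y s b" for a b
        using history_sigma_measurable_const[OF measurable that] by simp
    qed (rule Mf_node_increment_sum_eq_0[OF Q \<open>s < T\<close>])
    then show ?thesis by simp
  qed
  have "(\<Sum>a\<in>set_pmf Q. pmf Q a * gains S T H a)
      = (\<Sum>u=1..T. \<Sum>a\<in>set_pmf Q. pmf Q a * (H u a \<bullet> (S u a - S (u - 1) a)))"
    unfolding gains_def by (simp add: sum_distrib_left sum.swap[of _ "set_pmf Q"])
  also have "\<dots> = 0"
    using period_zero by (intro sum.neutral) (auto simp: Suc_le_eq gr0_conv_Suc)
  finally show ?thesis .
qed

lemma no_one_point_arbitrage_if_Omega_star_eq:
  fixes S :: "nat \<Rightarrow> 'x \<Rightarrow> real^'d" and Y :: "nat \<Rightarrow> 'x \<Rightarrow> real^'e"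
  assumes "Omega_star S Y T \<Omega> = \<Omega>" and "pr_predictable S Y T H"
  shows "\<not> one_point_arbitrage S T \<Omega> H"
proof
  assume "one_point_arbitrage S T \<Omega> H"
  then obtain \<omega> where "\<omega> \<in> \<Omega>" "0 < gains S T H \<omega>" and nonneg: "\<forall>a\<in>\<Omega>. 0 \<le> gains S T H a"
    unfolding one_point_arbitrage_def by blast
  moreover from this assms(1) obtain Q where Q: "Q \<in> Mf S Y T \<Omega>" "0 < pmf Q \<omega>"
    unfolding Omega_star_def by blast
  moreover have "set_pmf Q \<subseteq> \<Omega>" "finite (set_pmf Q)"
    using Q(1) by (simp_all add: Mf_def)
  ultimately have "0 < (\<Sum>a\<in>set_pmf Q. pmf Q a * gains S T H a)"
    by (intro sum_pos2[of _ \<omega>]) (auto simp: set_pmf_iff)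
  with expected_gains_eq_0[OF Q(1) assms(2)] show False by simp
qed

lemma gains_single_period:
  assumes "n < T"
  shows "gains S T (\<lambda>u a. if u = Suc n then K a else 0) \<omega> = K \<omega> \<bullet> (S (Suc n) \<omega> - S n \<omega>)"
  using assms by (simp add: gains_def if_distrib[of "\<lambda>x. x \<bullet> _"] cong: if_cong)

lemma pr_predictable_single_period:
  assumes "K \<in> borel_measurable (Fpr S Y n)"
  shows "pr_predictable S Y T (\<lambda>u a. if u = Suc n then K a else 0)"
  unfolding pr_predictable_def
proof
  fix t
  show "(\<lambda>a. if t = Suc n then K a else 0) \<in> borel_measurable (Fpr S Y (t - 1))"
    using assms by (cases "t = Suc n") simp_all
qed

lemma positive_relation_if_no_one_point_arbitrage:
  fixes S :: "nat \<Rightarrow> 'x \<Rightarrow> real^'d" and Y :: "nat \<Rightarrow> 'x \<Rightarrow> real^'e"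
  assumes no_arbitrage: "\<not> (\<exists>H. pr_predictable S Y T H \<and> one_point_arbitrage S T \<Omega> H)"
    and "n < T" and "\<omega> \<in> \<Omega>"
  shows "has_positive_relation (\<lambda>a. S (Suc n) a - S n a) {a\<in>\<Omega>. history S Y n a = history S Y n \<omega>} \<omega>"
proof (rule ccontr)
  let ?N = "{a. history S Y n a = history S Y n \<omega>}"
  assume "\<not> ?thesis"
  moreover have "\<omega> \<in> {a\<in>\<Omega>. history S Y n a = history S Y n \<omega>}"
    using \<open>\<omega> \<in> \<Omega>\<close> by simp
  ultimately obtain h where
    nonneg: "\<forall>a\<in>{a\<in>\<Omega>. history S Y n a = history S Y n \<omega>}. 0 \<le> h \<bullet> (S (Suc n) a - S n a)" and
    pos: "\<exists>a\<in>{a\<in>\<Omega>. history S Y n a = history S Y n \<omega>}. 0 < h \<bullet> (S (Suc n) a - S n a)"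
    by (elim nonneg_functional_if_no_positive_relation[rotated])
  define H where "H = (\<lambda>u a. if u = Suc n then indicator ?N a *\<^sub>R h else 0)"
  have "?N \<in> sets (Fpr S Y n)"
    unfolding Fpr_eq_history_sigma by (rule history_node_in_history_sigma) (rule projective_singleton)
  then have "pr_predictable S Y T H"
    unfolding H_def by (intro pr_predictable_single_period) simp
  moreover have "gains S T H a = indicator ?N a * (h \<bullet> (S (Suc n) a - S n a))" for a
    unfolding H_def using \<open>n < T\<close> by (simp add: gains_single_period)
  then have "one_point_arbitrage S T \<Omega> H"
    using nonneg pos unfolding one_point_arbitrage_def by (auto simp: indicator_def)
  ultimately show False
    using no_arbitrage by blast
qed

theorem lemma3p6:
  fixes S :: "nat \<Rightarrow> 'x::polish_space \<Rightarrow> real^'d"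
    and Y :: "nat \<Rightarrow> 'x \<Rightarrow> real^'e"
    and T :: nat
    and \<Omega> :: "'x set"
  assumes S_borel: "\<forall>t\<le>T. S t \<in> borel_measurable borel"
    and Y_borel: "\<forall>t\<le>T. Y t \<in> borel_measurable borel"
    and Y0_const: "\<exists>c. \<forall>\<omega>. Y 0 \<omega> = c"
    and \<Omega>_proj: "projective \<Omega>"
  shows "(\<not> (\<exists>H. pr_predictable S Y T H \<and> one_point_arbitrage S T \<Omega> H))
           \<longleftrightarrow> Omega_star S Y T \<Omega> = \<Omega>"
proof
  assume "\<not> (\<exists>H. pr_predictable S Y T H \<and> one_point_arbitrage S T \<Omega> H)"
  then have "\<forall>\<omega>\<in>\<Omega>. \<exists>p E. node_martingale S Y T \<Omega> 0 \<omega> p E"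
    by (intro node_martingale_exists positive_relation_if_no_one_point_arbitrage) simp_all
  have "\<Omega> \<subseteq> Omega_star S Y T \<Omega>"
  proof
    fix \<omega> assume "\<omega> \<in> \<Omega>"
    with \<open>\<forall>\<omega>\<in>\<Omega>. \<exists>p E. node_martingale S Y T \<Omega> 0 \<omega> p E\<close>
    obtain p E where "node_martingale S Y T \<Omega> 0 \<omega> p E" by blast
    then have "\<exists>Q\<in>Mf S Y T \<Omega>. 0 < pmf Q \<omega>" by (rule Mf_of_node_martingale)
    with \<open>\<omega> \<in> \<Omega>\<close> show "\<omega> \<in> Omega_star S Y T \<Omega>" by (simp add: Omega_star_def)
  qed
  then show "Omega_star S Y T \<Omega> = \<Omega>"
    by (auto simp: Omega_star_def)
next
  assume "Omega_star S Y T \<Omega> = \<Omega>"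
  then show "\<not> (\<exists>H. pr_predictable S Y T H \<and> one_point_arbitrage S T \<Omega> H)"
    using no_one_point_arbitrage_if_Omega_star_eq by blast
qed

end
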